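(* Let $\alpha_1,\dots,\alpha_4$ be constants, $H=H(t,t^-,q,q^-,p,p^-)$ smooth, and $X=\xi\partial_t+\eta\partial_q+\nu\partial_p$ (coefficients functions of $(t,q,p)$) such that $\Omega=0$. Let $C$ and $P$ be as defined below. If, on the solutions of the local extremal equation $F_H=\xi\frac{\delta\tilde H}{\delta t}+\eta\frac{\delta\tilde H}{\delta q}+\nu\frac{\delta\tilde H}{\delta p}=0$, one has $(S_+-1)P=D(V)$ for some function $V(t^+,t,t^-,q^+,q,q^-,p^+,p,p^-)$, then $I=C-V$ is a differential first integral, i.e. $D(I)=0$ on the solutions of $F_H=0$.
   Context: Constant delay $\tau>0$; $t^\pm=t\pm\tau$, $f^\pm=f(t\pm\tau)$; scalar $q,p$. $S_\pm$ are the forward/backward shift operators on expressions; $\xi^\pm=S_\pm(\xi)$ etc.; $H^+=S_+(H)$. $D$ is the total derivative acting on variables at $t^-,t,t^+$. $\tilde H=p^{-}(\alpha_{1}\dot{q}+\alpha_{2}\dot{q}^{-})+p(\alpha_{3}\dot{q}+\alpha_{4}\dot{q}^{-})-H$; $\frac{\delta\tilde H}{\delta p}=\alpha_1\dot q^++(\alpha_2+\alpha_3)\dot q+\alpha_4\dot q^--\partial_p(H+H^+)$, $\frac{\delta\tilde H}{\delta q}=-\big(\alpha_4\dot p^++(\alpha_2+\alpha_3)\dot p+\alpha_1\dot p^-+\partial_q(H+H^+)\big)$, $\frac{\delta\tilde H}{\delta t}=D[\alpha_2(p\dot q-p^-\dot q^-)+\alpha_4(p^+\dot q-p\dot q^-)]+D(H)-\partial_t(H+H^+)$.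 $\Omega=\nu^{-}(\alpha_{1}\dot{q}+\alpha_{2}\dot{q}^{-})+p^{-}(\alpha_{1}D(\eta)+\alpha_{2}D(\eta^{-}))+\nu(\alpha_{3}\dot{q}+\alpha_{4}\dot{q}^{-})+p(\alpha_{3}D(\eta)+\alpha_{4}D(\eta^{-}))+(\alpha_{2}p^{-}+\alpha_{4}p)\dot{q}^{-}D(\xi-\xi^{-})-\xi H_t-\eta H_q-\nu H_p-\xi^{-}H_{t^-}-\eta^{-}H_{q^-}-\nu^{-}H_{p^-}-HD(\xi)$ (invariance condition of the Hamiltonian). $C=\eta(\alpha_{4}p^{+}+(\alpha_{2}+\alpha_{3})p+\alpha_{1}p^{-})-\xi\big(\alpha_{2}(p\dot{q}-p^{-}\dot{q}^{-})+\alpha_{4}(p^{+}\dot{q}-p\dot{q}^{-})+H\big)$, $P=(\alpha_{2}p^{-}+\alpha_{4}p)D(\eta^{-})+\nu^{-}(\alpha_{1}\dot{q}+\alpha_{2}\dot{q}^{-})-(\alpha_{2}p^{-}+\alpha_{4}p)\dot{q}^{-}D(\xi^{-})-\xi^{-}H_{t^-}-\eta^{-}H_{q^-}-\nu^{-}H_{p^-}$. Equations are considered with $t^+-t=t-t^-=\tau$. *)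

theory Defs
  imports "HOL-Analysis.Analysis"
begin

(* Hamiltonian H(t, t^-, q, q^-, p, p^-): curried, argument order t, t^-, q, q^-, p, p^- *)
type_synonym ham = "real \<Rightarrow> real \<Rightarrow> real \<Rightarrow> real \<Rightarrow> real \<Rightarrow> real \<Rightarrow> real"
type_synonym coef = "real \<Rightarrow> real \<Rightarrow> real \<Rightarrow> real"
(* V(t^+, t, t^-, q^+, q, q^-, p^+, p, p^-) *)
type_synonym fun9 = "real \<Rightarrow> real \<Rightarrow> real \<Rightarrow> real \<Rightarrow> real \<Rightarrow> real \<Rightarrow> real \<Rightarrow> real \<Rightarrow> real \<Rightarrow> real"

definition ham_diff :: "ham \<Rightarrow> bool" where
  "ham_diff H \<longleftrightarrow> (\<forall>x. (\<lambda>(a, b, c, d, e, f). H a b c d e f) differentiable (at x))"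

definition coef_diff :: "coef \<Rightarrow> bool" where
  "coef_diff g \<longleftrightarrow> (\<forall>x. (\<lambda>(a, b, c). g a b c) differentiable (at x))"

definition fun9_diff :: "fun9 \<Rightarrow> bool" where
  "fun9_diff V \<longleftrightarrow> (\<forall>x. (\<lambda>(a1, a2, a3, a4, a5, a6, a7, a8, a9). V a1 a2 a3 a4 a5 a6 a7 a8 a9)
                          differentiable (at x))"

definition traj :: "(real \<Rightarrow> real) \<Rightarrow> (real \<Rightarrow> real) \<Rightarrow> bool" where
  "traj q p \<longleftrightarrow> (\<forall>t. q differentiable (at t)) \<and> (\<forall>t. deriv q differentiable (at t))
                 \<and> (\<forall>t. p differentiable (at t))"

definition H_t :: "ham \<Rightarrow> ham" where
  "H_t H t tm q qm p pm = deriv (\<lambda>s. H s tm q qm p pm) t"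
definition H_tm :: "ham \<Rightarrow> ham" where
  "H_tm H t tm q qm p pm = deriv (\<lambda>s. H t s q qm p pm) tm"
definition H_q :: "ham \<Rightarrow> ham" where
  "H_q H t tm q qm p pm = deriv (\<lambda>s. H t tm s qm p pm) q"
definition H_qm :: "ham \<Rightarrow> ham" where
  "H_qm H t tm q qm p pm = deriv (\<lambda>s. H t tm q s p pm) qm"
definition H_p :: "ham \<Rightarrow> ham" where
  "H_p H t tm q qm p pm = deriv (\<lambda>s. H t tm q qm s pm) p"
definition H_pm :: "ham \<Rightarrow> ham" where
  "H_pm H t tm q qm p pm = deriv (\<lambda>s. H t tm q qm p s) pm"

definition ev :: "real \<Rightarrow> ham \<Rightarrow> (real \<Rightarrow> real) \<Rightarrow> (real \<Rightarrow> real) \<Rightarrow> real \<Rightarrow> real" where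
  "ev \<tau> G q p t = G t (t - \<tau>) (q t) (q (t - \<tau>)) (p t) (p (t - \<tau>))"

definition evc :: "coef \<Rightarrow> (real \<Rightarrow> real) \<Rightarrow> (real \<Rightarrow> real) \<Rightarrow> real \<Rightarrow> real" where
  "evc g q p t = g t (q t) (p t)"

definition ev9 :: "real \<Rightarrow> fun9 \<Rightarrow> (real \<Rightarrow> real) \<Rightarrow> (real \<Rightarrow> real) \<Rightarrow> real \<Rightarrow> real" where
  "ev9 \<tau> V q p t = V (t + \<tau>) t (t - \<tau>) (q (t + \<tau>)) (q t) (q (t - \<tau>)) (p (t + \<tau>)) (p t) (p (t - \<tau>))"

text \<open>The total derivative D of an expression along the trajectory is the time derivative
  (deriv) of the expression evaluated along the trajectory.\<close>

definition Omega ::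
  "real \<Rightarrow> real \<Rightarrow> real \<Rightarrow> real \<Rightarrow> real \<Rightarrow> ham \<Rightarrow> coef \<Rightarrow> coef \<Rightarrow> coef
    \<Rightarrow> (real \<Rightarrow> real) \<Rightarrow> (real \<Rightarrow> real) \<Rightarrow> real \<Rightarrow> real" where
  "Omega \<tau> a1 a2 a3 a4 H \<xi> \<eta> \<nu> q p t =
    (let X = evc \<xi> q p; E = evc \<eta> q p; N = evc \<nu> q p; qd = deriv q; tm = t - \<tau> in
       N tm * (a1 * qd t + a2 * qd tm)
     + p tm * (a1 * deriv E t + a2 * deriv (\<lambda>s. E (s - \<tau>)) t)
     + N t * (a3 * qd t + a4 * qd tm)
     + p t * (a3 * deriv E t + a4 * deriv (\<lambda>s. E (s - \<tau>)) t)
     + (a2 * p tm + a4 * p t) * qd tm * deriv (\<lambda>s. X s - X (s - \<tau>)) t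
     - X t * ev \<tau> (H_t H) q p t - E t * ev \<tau> (H_q H) q p t - N t * ev \<tau> (H_p H) q p t
     - X tm * ev \<tau> (H_tm H) q p t - E tm * ev \<tau> (H_qm H) q p t - N tm * ev \<tau> (H_pm H) q p t
     - ev \<tau> H q p t * deriv X t)"

definition varH_p ::
  "real \<Rightarrow> real \<Rightarrow> real \<Rightarrow> real \<Rightarrow> real \<Rightarrow> ham \<Rightarrow> (real \<Rightarrow> real) \<Rightarrow> (real \<Rightarrow> real) \<Rightarrow> real \<Rightarrow> real" where
  "varH_p \<tau> a1 a2 a3 a4 H q p t =
     a1 * deriv q (t + \<tau>) + (a2 + a3) * deriv q t + a4 * deriv q (t - \<tau>)
     - (ev \<tau> (H_p H) q p t + ev \<tau> (H_pm H) q p (t + \<tau>))"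

definition varH_q ::
  "real \<Rightarrow> real \<Rightarrow> real \<Rightarrow> real \<Rightarrow> real \<Rightarrow> ham \<Rightarrow> (real \<Rightarrow> real) \<Rightarrow> (real \<Rightarrow> real) \<Rightarrow> real \<Rightarrow> real" where
  "varH_q \<tau> a1 a2 a3 a4 H q p t =
     - (a4 * deriv p (t + \<tau>) + (a2 + a3) * deriv p t + a1 * deriv p (t - \<tau>)
        + (ev \<tau> (H_q H) q p t + ev \<tau> (H_qm H) q p (t + \<tau>)))"

definition varH_t ::
  "real \<Rightarrow> real \<Rightarrow> real \<Rightarrow> real \<Rightarrow> real \<Rightarrow> ham \<Rightarrow> (real \<Rightarrow> real) \<Rightarrow> (real \<Rightarrow> real) \<Rightarrow> real \<Rightarrow> real" where
  "varH_t \<tau> a1 a2 a3 a4 H q p t =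
     deriv (\<lambda>s. a2 * (p s * deriv q s - p (s - \<tau>) * deriv q (s - \<tau>))
              + a4 * (p (s + \<tau>) * deriv q s - p s * deriv q (s - \<tau>))) t
     + deriv (ev \<tau> H q p) t
     - (ev \<tau> (H_t H) q p t + ev \<tau> (H_tm H) q p (t + \<tau>))"

definition F_H ::
  "real \<Rightarrow> real \<Rightarrow> real \<Rightarrow> real \<Rightarrow> real \<Rightarrow> ham \<Rightarrow> coef \<Rightarrow> coef \<Rightarrow> coef
    \<Rightarrow> (real \<Rightarrow> real) \<Rightarrow> (real \<Rightarrow> real) \<Rightarrow> real \<Rightarrow> real" where
  "F_H \<tau> a1 a2 a3 a4 H \<xi> \<eta> \<nu> q p t =
     evc \<xi> q p t * varH_t \<tau> a1 a2 a3 a4 H q p t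
   + evc \<eta> q p t * varH_q \<tau> a1 a2 a3 a4 H q p t
   + evc \<nu> q p t * varH_p \<tau> a1 a2 a3 a4 H q p t"

definition Cq ::
  "real \<Rightarrow> real \<Rightarrow> real \<Rightarrow> real \<Rightarrow> real \<Rightarrow> ham \<Rightarrow> coef \<Rightarrow> coef
    \<Rightarrow> (real \<Rightarrow> real) \<Rightarrow> (real \<Rightarrow> real) \<Rightarrow> real \<Rightarrow> real" where
  "Cq \<tau> a1 a2 a3 a4 H \<xi> \<eta> q p t =
     evc \<eta> q p t * (a4 * p (t + \<tau>) + (a2 + a3) * p t + a1 * p (t - \<tau>))
   - evc \<xi> q p t * (a2 * (p t * deriv q t - p (t - \<tau>) * deriv q (t - \<tau>))
                    + a4 * (p (t + \<tau>) * deriv q t - p t * deriv q (t - \<tau>))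
                    + ev \<tau> H q p t)"

definition Pq ::
  "real \<Rightarrow> real \<Rightarrow> real \<Rightarrow> real \<Rightarrow> real \<Rightarrow> ham \<Rightarrow> coef \<Rightarrow> coef \<Rightarrow> coef
    \<Rightarrow> (real \<Rightarrow> real) \<Rightarrow> (real \<Rightarrow> real) \<Rightarrow> real \<Rightarrow> real" where
  "Pq \<tau> a1 a2 a3 a4 H \<xi> \<eta> \<nu> q p t =
    (let X = evc \<xi> q p; E = evc \<eta> q p; N = evc \<nu> q p; qd = deriv q; tm = t - \<tau> in
       (a2 * p tm + a4 * p t) * deriv (\<lambda>s. E (s - \<tau>)) t
     + N tm * (a1 * qd t + a2 * qd tm)
     - (a2 * p tm + a4 * p t) * qd tm * deriv (\<lambda>s. X (s - \<tau>)) t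
     - X tm * ev \<tau> (H_tm H) q p t - E tm * ev \<tau> (H_qm H) q p t - N tm * ev \<tau> (H_pm H) q p t)"

end

theory Submission
  imports Defs
begin

text \<open>Along every admissible trajectory, whether or not it solves the extremal equation, the
  product rule gives the identity D(C) = \<Omega> + (S_+ - 1) P - F_H: the terms of \<Omega> carrying
  the delayed arguments t - \<tau> are exactly those collected in P. On solutions of F_H = 0
  with \<Omega> = 0 the hypothesis (S_+ - 1) P = D(V) then turns it into D(C) = D(V).\<close>

lemma has_real_derivative_shift:
  fixes f :: "real \<Rightarrow> real"
  assumes "f differentiable at (x + c)"
  shows "((\<lambda>s. f (s + c)) has_real_derivative deriv f (x + c)) (at x)"
  using assms by (simp add: DERIV_deriv_iff_real_differentiable flip: DERIV_shift)

lemma has_real_derivative_shift_minus: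
  fixes f :: "real \<Rightarrow> real"
  assumes "f differentiable at (x - c)"
  shows "((\<lambda>s. f (s - c)) has_real_derivative deriv f (x - c)) (at x)"
  using has_real_derivative_shift[of f x "- c"] assms by simp

lemma differentiable_shift:
  fixes f :: "real \<Rightarrow> real"
  assumes "f differentiable at (x + c)"
  shows "(\<lambda>s. f (s + c)) differentiable at x"
  using has_real_derivative_shift[OF assms] by (auto simp: real_differentiable_def)

lemma differentiable_shift_minus:
  fixes f :: "real \<Rightarrow> real"
  assumes "f differentiable at (x - c)"
  shows "(\<lambda>s. f (s - c)) differentiable at x"
  using has_real_derivative_shift_minus[OF assms] by (auto simp: real_differentiable_def)

lemma deriv_shift_minus:
  fixes f :: "real \<Rightarrow> real"
  assumes "f differentiable at (x - c)"
  shows "deriv (\<lambda>s. f (s - c)) x = deriv f (x - c)"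
  using assms by (rule has_real_derivative_shift_minus[THEN DERIV_imp_deriv])

lemma traj_differentiable:
  assumes "traj q p"
  shows "q differentiable at x" "deriv q differentiable at x" "p differentiable at x"
  using assms by (simp_all add: traj_def)

lemma evc_differentiable:
  assumes "coef_diff g" and "traj q p"
  shows "evc g q p differentiable at t"
proof -
  have "(\<lambda>s. (s, q s, p s)) differentiable at t"
    using traj_differentiable[OF assms(2)] by (intro differentiable_Pair differentiable_ident)
  moreover have "(\<lambda>(a, b, c). g a b c) differentiable at (t, q t, p t)"
    using assms(1) by (simp add: coef_diff_def)
  ultimately have "(\<lambda>(a, b, c). g a b c) \<circ> (\<lambda>s. (s, q s, p s)) differentiable at t"
    by (rule differentiable_chain_at)
  then show ?thesis
    by (simp add: evc_def[abs_def] o_def)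
qed

lemma ev_differentiable:
  assumes "ham_diff H" and "traj q p"
  shows "ev \<tau> H q p differentiable at t"
proof -
  note diff = traj_differentiable[OF assms(2)]
  have "(\<lambda>s. (s, s - \<tau>, q s, q (s - \<tau>), p s, p (s - \<tau>))) differentiable at t"
    using diff differentiable_shift_minus
    by (auto intro!: differentiable_Pair differentiable_ident derivative_intros)
  moreover have "(\<lambda>(a, b, c, d, e, f). H a b c d e f) differentiable
      at (t, t - \<tau>, q t, q (t - \<tau>), p t, p (t - \<tau>))"
    using assms(1) by (simp add: ham_diff_def)
  ultimately have "(\<lambda>(a, b, c, d, e, f). H a b c d e f)
      \<circ> (\<lambda>s. (s, s - \<tau>, q s, q (s - \<tau>), p s, p (s - \<tau>))) differentiable at t"
    by (rule differentiable_chain_at)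
  then show ?thesis
    by (simp add: ev_def[abs_def] o_def)
qed

lemma ev9_differentiable:
  assumes "fun9_diff V" and "traj q p"
  shows "ev9 \<tau> V q p differentiable at t"
proof -
  note diff = traj_differentiable[OF assms(2)]
  have "(\<lambda>s. (s + \<tau>, s, s - \<tau>, q (s + \<tau>), q s, q (s - \<tau>), p (s + \<tau>), p s, p (s - \<tau>)))
      differentiable at t"
    using diff differentiable_shift differentiable_shift_minus
    by (auto intro!: differentiable_Pair differentiable_ident derivative_intros)
  moreover have "(\<lambda>(a1, a2, a3, a4, a5, a6, a7, a8, a9). V a1 a2 a3 a4 a5 a6 a7 a8 a9)
      differentiable at (t + \<tau>, t, t - \<tau>, q (t + \<tau>), q t, q (t - \<tau>), p (t + \<tau>), p t, p (t - \<tau>))"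
    using assms(1) by (simp add: fun9_diff_def)
  ultimately have "(\<lambda>(a1, a2, a3, a4, a5, a6, a7, a8, a9). V a1 a2 a3 a4 a5 a6 a7 a8 a9)
      \<circ> (\<lambda>s. (s + \<tau>, s, s - \<tau>, q (s + \<tau>), q s, q (s - \<tau>), p (s + \<tau>), p s, p (s - \<tau>)))
      differentiable at t"
    by (rule differentiable_chain_at)
  then show ?thesis
    by (simp add: ev9_def[abs_def] o_def)
qed

lemma Cq_has_real_derivative:
  assumes "traj q p" and "ham_diff H" and "coef_diff \<xi>" and "coef_diff \<eta>"
  shows "(Cq \<tau> a1 a2 a3 a4 H \<xi> \<eta> q p has_real_derivative
            Omega \<tau> a1 a2 a3 a4 H \<xi> \<eta> \<nu> q p t
          + (Pq \<tau> a1 a2 a3 a4 H \<xi> \<eta> \<nu> q p (t + \<tau>) - Pq \<tau> a1 a2 a3 a4 H \<xi> \<eta> \<nu> q p t)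
          - F_H \<tau> a1 a2 a3 a4 H \<xi> \<eta> \<nu> q p t) (at t)"
proof -
  define X E N h qd where "X = evc \<xi> q p" and "E = evc \<eta> q p" and "N = evc \<nu> q p"
    and "h = ev \<tau> H q p" and "qd = deriv q"
  define M where "M = (\<lambda>s. a4 * p (s + \<tau>) + (a2 + a3) * p s + a1 * p (s - \<tau>))"
  define W where "W = (\<lambda>s. a2 * (p s * qd s - p (s - \<tau>) * qd (s - \<tau>))
                          + a4 * (p (s + \<tau>) * qd s - p s * qd (s - \<tau>)))"
  have diff: "X differentiable at x" "E differentiable at x" "h differentiable at x"
    "p differentiable at x" "qd differentiable at x" for x
    using assms evc_differentiable ev_differentiable traj_differentiable
    unfolding X_def E_def h_def qd_def by blast+
  note has_deriv = diff[THEN DERIV_deriv_iff_real_differentiable[THEN iffD2]]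
  have "W differentiable at t"
    unfolding W_def using diff differentiable_shift differentiable_shift_minus
    by (auto intro!: derivative_intros)
  then have W': "(W has_real_derivative deriv W t) (at t)"
    by (simp add: DERIV_deriv_iff_real_differentiable)
  have M': "(M has_real_derivative
      a4 * deriv p (t + \<tau>) + (a2 + a3) * deriv p t + a1 * deriv p (t - \<tau>)) (at t)"
    unfolding M_def using diff
    by (auto intro!: derivative_eq_intros has_deriv has_real_derivative_shift
        has_real_derivative_shift_minus)
  have "Cq \<tau> a1 a2 a3 a4 H \<xi> \<eta> q p = (\<lambda>s. E s * M s - X s * (W s + h s))"
    by (auto simp: Cq_def E_def X_def M_def W_def h_def qd_def)
  then have C': "(Cq \<tau> a1 a2 a3 a4 H \<xi> \<eta> q p has_real_derivative
      deriv E t * M t + E t * (a4 * deriv p (t + \<tau>) + (a2 + a3) * deriv p t + a1 * deriv p (t - \<tau>))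
      - (deriv X t * (W t + h t) + X t * (deriv W t + deriv h t))) (at t)"
    by (auto intro!: derivative_eq_intros has_deriv W' M')
  have shifted_derivs:
    "deriv (\<lambda>s. E (s - \<tau>)) t = deriv E (t - \<tau>)" "deriv (\<lambda>s. E (s - \<tau>)) (t + \<tau>) = deriv E t"
    "deriv (\<lambda>s. X (s - \<tau>)) t = deriv X (t - \<tau>)" "deriv (\<lambda>s. X (s - \<tau>)) (t + \<tau>) = deriv X t"
    "deriv (\<lambda>s. X s - X (s - \<tau>)) t = deriv X t - deriv X (t - \<tau>)"
    using deriv_shift_minus[OF diff(1)] deriv_shift_minus[OF diff(2)] diff(1)
    by (auto intro!: DERIV_imp_deriv derivative_eq_intros has_deriv has_real_derivative_shift_minus)
  have varH_t_eq: "varH_t \<tau> a1 a2 a3 a4 H q p t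
      = deriv W t + deriv h t - (ev \<tau> (H_t H) q p t + ev \<tau> (H_tm H) q p (t + \<tau>))"
    by (simp add: varH_t_def W_def h_def qd_def)
  have W_t: "W t = a2 * (p t * qd t - p (t - \<tau>) * qd (t - \<tau>))
                 + a4 * (p (t + \<tau>) * qd t - p t * qd (t - \<tau>))"
    by (simp add: W_def)
  show ?thesis
    using C'
    unfolding Omega_def Pq_def F_H_def varH_t_eq varH_q_def varH_p_def Let_def
      X_def[symmetric] E_def[symmetric] N_def[symmetric] h_def[symmetric] qd_def[symmetric]
      shifted_derivs
    by (simp add: M_def W_t algebra_simps)
qed

theorem proposition1:
  fixes \<tau> a1 a2 a3 a4 :: real
    and H :: ham and \<xi> \<eta> \<nu> :: coef and V :: fun9
  assumes "\<tau> > 0"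
    and "ham_diff H" and "coef_diff \<xi>" and "coef_diff \<eta>" and "coef_diff \<nu>"
    and "fun9_diff V"
    and Omega0: "\<forall>q p. traj q p \<longrightarrow> (\<forall>t. Omega \<tau> a1 a2 a3 a4 H \<xi> \<eta> \<nu> q p t = 0)"
    and PV: "\<forall>q p. traj q p \<and> (\<forall>t. F_H \<tau> a1 a2 a3 a4 H \<xi> \<eta> \<nu> q p t = 0) \<longrightarrow>
               (\<forall>t. Pq \<tau> a1 a2 a3 a4 H \<xi> \<eta> \<nu> q p (t + \<tau>) - Pq \<tau> a1 a2 a3 a4 H \<xi> \<eta> \<nu> q p t
                    = deriv (ev9 \<tau> V q p) t)"
  shows "\<forall>q p. traj q p \<and> (\<forall>t. F_H \<tau> a1 a2 a3 a4 H \<xi> \<eta> \<nu> q p t = 0) \<longrightarrow>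
           (\<forall>t. ((\<lambda>s. Cq \<tau> a1 a2 a3 a4 H \<xi> \<eta> q p s - ev9 \<tau> V q p s)
                   has_real_derivative 0) (at t))"
proof (intro allI impI)
  fix q p t
  assume solution: "traj q p \<and> (\<forall>t. F_H \<tau> a1 a2 a3 a4 H \<xi> \<eta> \<nu> q p t = 0)"
  then have "traj q p" by simp
  have "(Cq \<tau> a1 a2 a3 a4 H \<xi> \<eta> q p has_real_derivative
      Omega \<tau> a1 a2 a3 a4 H \<xi> \<eta> \<nu> q p t
      + (Pq \<tau> a1 a2 a3 a4 H \<xi> \<eta> \<nu> q p (t + \<tau>) - Pq \<tau> a1 a2 a3 a4 H \<xi> \<eta> \<nu> q p t)
      - F_H \<tau> a1 a2 a3 a4 H \<xi> \<eta> \<nu> q p t) (at t)"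
    using Cq_has_real_derivative \<open>traj q p\<close> assms(2-4) .
  then have "(Cq \<tau> a1 a2 a3 a4 H \<xi> \<eta> q p has_real_derivative deriv (ev9 \<tau> V q p) t) (at t)"
    using Omega0 PV solution by simp
  moreover have "(ev9 \<tau> V q p has_real_derivative deriv (ev9 \<tau> V q p) t) (at t)"
    using ev9_differentiable[OF \<open>fun9_diff V\<close> \<open>traj q p\<close>]
    by (simp add: DERIV_deriv_iff_real_differentiable)
  ultimately show "((\<lambda>s. Cq \<tau> a1 a2 a3 a4 H \<xi> \<eta> q p s - ev9 \<tau> V q p s)
      has_real_derivative 0) (at t)"
    using DERIV_diff by fastforce
qed

end
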